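(* The sequential fan $S_\omega$ is not $L$-selective.
   Context: For spaces $Y$, $X$, a map $\varphi:Y\to\mathcal P(X)\setminus\{\emptyset\}$ is lower semicontinuous (l.s.c.) if $\{y:\varphi(y)\cap U\neq\emptyset\}$ is open in $Y$ for every open $U\subseteq X$; a selection is a map $f:Y\to X$ with $f(y)\in\varphi(y)$ for all $y$. $X$ is $Y$-selective if every l.s.c. map from $Y$ to the nonempty closed subsets of $X$ has a continuous selection; $L$-selective means $(\omega+1)$-selective, with $\omega+1$ carrying the order topology. The sequential fan $S_\omega$ is the quotient of the topological sum of countably many convergent sequences (with limits) obtained by identifying all limit points. *)

theory Defs
  imports "HOL-Analysis.Analysis"
begin

definition lsc_map :: "'a topology \<Rightarrow> 'b topology \<Rightarrow> ('a \<Rightarrow> 'b set) \<Rightarrow> bool" where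
  "lsc_map Y X \<phi> \<longleftrightarrow>
     (\<forall>U. openin X U \<longrightarrow> openin Y {y \<in> topspace Y. \<phi> y \<inter> U \<noteq> {}})"

definition selective :: "'a topology \<Rightarrow> 'b topology \<Rightarrow> bool" where
  "selective Y X \<longleftrightarrow>
     (\<forall>\<phi>. (\<forall>y\<in>topspace Y. closedin X (\<phi> y) \<and> \<phi> y \<noteq> {}) \<and> lsc_map Y X \<phi> \<longrightarrow>
        (\<exists>f. continuous_map Y X f \<and> (\<forall>y\<in>topspace Y. f y \<in> \<phi> y)))"

text \<open>omega+1 with the order topology: the type enat with its (order) topology.\<close>
definition omega_plus_one :: "enat topology" where
  "omega_plus_one = euclidean"

definition L_selective :: "'b topology \<Rightarrow> bool" where
  "L_selective X \<longleftrightarrow> selective omega_plus_one X"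

definition quotient_topology :: "'a topology \<Rightarrow> ('a \<Rightarrow> 'b) \<Rightarrow> 'b topology" where
  "quotient_topology X q =
     topology (\<lambda>U. U \<subseteq> q ` topspace X \<and> openin X {x \<in> topspace X. q x \<in> U})"

text \<open>Sequential fan: topological sum of countably many convergent sequences with their
  limits (each a copy of omega+1, the limit being \<infinity>), with all limit points identified
  to the single point (0, \<infinity>).\<close>
definition fan_identify :: "nat \<times> enat \<Rightarrow> nat \<times> enat" where
  "fan_identify p = (if snd p = \<infinity> then (0, \<infinity>) else p)"

definition sequential_fan :: "(nat \<times> enat) topology" where
  "sequential_fan = quotient_topology (sum_topology (\<lambda>n::nat. omega_plus_one) UNIV) fan_identify"

end

theory Submission
  imports Defs
begin

text \<open>Send \<open>\<omega>\<close> to the apex and the isolated point \<open>n = \<langle>a, b\<rangle>\<close> (Cantor pairing) to the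
  \<open>b\<close>-th point of spine \<open>a + 1\<close> together with the \<open>a\<close>-th point of spine \<open>0\<close>. A neighbourhood
  of the apex contains all but finitely many points of every spine, so it meets all but
  finitely many of these two-point sets: the map is lower semicontinuous.
  A continuous selection \<open>f\<close> would converge to the apex along the isolated points. For fixed
  \<open>a\<close> it cannot always choose the point \<open>a\<close> of spine \<open>0\<close>, since that closed point would be
  hit infinitely often; so it chooses the point \<open>b\<^sub>a\<close> of spine \<open>a + 1\<close> for some \<open>b\<^sub>a\<close>.
  But the points \<open>(a + 1, b\<^sub>a)\<close> form a closed set missing the apex, and \<open>f\<close> hits it infinitely
  often.\<close>

lemma openin_quotient_topology:
  "openin (quotient_topology X q) U \<longleftrightarrow>
     U \<subseteq> q ` topspace X \<and> openin X {x \<in> topspace X. q x \<in> U}"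
proof -
  have "istopology (\<lambda>U. U \<subseteq> q ` topspace X \<and> openin X {x \<in> topspace X. q x \<in> U})"
    unfolding istopology_def
  proof (rule conjI; intro allI impI)
    fix S T
    assume S: "S \<subseteq> q ` topspace X \<and> openin X {x \<in> topspace X. q x \<in> S}"
      and T: "T \<subseteq> q ` topspace X \<and> openin X {x \<in> topspace X. q x \<in> T}"
    have eq: "{x \<in> topspace X. q x \<in> S \<inter> T} =
        {x \<in> topspace X. q x \<in> S} \<inter> {x \<in> topspace X. q x \<in> T}"
      by blast
    moreover have "openin X ({x \<in> topspace X. q x \<in> S} \<inter> {x \<in> topspace X. q x \<in> T})"
      using S T by (intro openin_Int) simp_all
    ultimately show "S \<inter> T \<subseteq> q ` topspace X \<and> openin X {x \<in> topspace X. q x \<in> S \<inter> T}"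
      using S by (simp only: eq) blast
  next
    fix K
    assume K: "\<forall>U\<in>K. U \<subseteq> q ` topspace X \<and> openin X {x \<in> topspace X. q x \<in> U}"
    have "{x \<in> topspace X. q x \<in> \<Union>K} = (\<Union>U\<in>K. {x \<in> topspace X. q x \<in> U})"
      by blast
    then show "\<Union>K \<subseteq> q ` topspace X \<and> openin X {x \<in> topspace X. q x \<in> \<Union>K}"
      using K by auto
  qed
  then show ?thesis
    by (simp add: quotient_topology_def)
qed

lemma open_enat_singleton: "open {enat n}"
proof (cases n)
  case 0
  then have "{enat n} = {..<enat 1}"
    by (auto elim: less_enatE)
  then show ?thesis by simp
next
  case (Suc m)
  then have "{enat n} = {enat m<..<enat (Suc n)}"
    by (auto elim!: less_enatE)
  then show ?thesis by simp
qed

lemma open_enat_iff: "open (S :: enat set) \<longleftrightarrow> (\<infinity> \<in> S \<longrightarrow> finite {n. enat n \<notin> S})"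
proof
  assume "open S"
  show "\<infinity> \<in> S \<longrightarrow> finite {n. enat n \<notin> S}"
  proof
    assume "\<infinity> \<in> S"
    then obtain b where "b < \<infinity>" "{b<..\<infinity>} \<subseteq> S"
      using open_left[OF \<open>open S\<close>, of _ 0] by (metis zero_enat_def enat_ord_code(4))
    then obtain N where "{enat N<..\<infinity>} \<subseteq> S"
      by (metis less_infinityE)
    then have "{n. enat n \<notin> S} \<subseteq> {..N}"
      by (auto simp: subset_eq not_le)
    then show "finite {n. enat n \<notin> S}"
      using finite_subset by blast
  qed
next
  assume cofinite: "\<infinity> \<in> S \<longrightarrow> finite {n. enat n \<notin> S}"
  have finite_part: "open (\<Union>x\<in>S - {\<infinity>}. {x})"
    by (intro open_UN ballI) (auto simp: open_enat_singleton)
  show "open S"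
  proof (cases "\<infinity> \<in> S")
    case False
    then have "S = (\<Union>x\<in>S - {\<infinity>}. {x})"
      by auto
    with finite_part show ?thesis
      by simp
  next
    case True
    then obtain N where "\<forall>n\<in>{n. enat n \<notin> S}. n \<le> N"
      using cofinite finite_nat_set_iff_bounded_le by blast
    have "{enat N<..} \<subseteq> S"
    proof
      fix x :: enat
      assume "x \<in> {enat N<..}"
      with True \<open>\<forall>n\<in>{n. enat n \<notin> S}. n \<le> N\<close> show "x \<in> S"
        by (cases x) auto
    qed
    then have "S = (\<Union>x\<in>S - {\<infinity>}. {x}) \<union> {enat N<..}"
      using True by auto
    with finite_part show ?thesis
      by (metis open_Un open_greaterThan)
  qed
qed

lemma topspace_omega_plus_one [simp]: "topspace omega_plus_one = UNIV"
  by (simp add: omega_plus_one_def)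

lemma continuous_map_omega_plus_one_cofinite:
  assumes "continuous_map omega_plus_one X f" "openin X U" "f \<infinity> \<in> U"
  shows "finite {n. f (enat n) \<notin> U}"
proof -
  have "open {y. f y \<in> U}"
    using openin_continuous_map_preimage[OF assms(1,2)]
    by (simp add: omega_plus_one_def)
  with assms(3) show ?thesis
    by (simp add: open_enat_iff)
qed

abbreviation fan_apex :: "nat \<times> enat" where
  "fan_apex \<equiv> (0, \<infinity>)"

lemma range_fan_identify: "range fan_identify = {p. snd p = \<infinity> \<longrightarrow> p = fan_apex}"
proof (intro set_eqI iffI)
  fix p :: "nat \<times> enat"
  assume "p \<in> {p. snd p = \<infinity> \<longrightarrow> p = fan_apex}"
  then have "fan_identify p = p"
    by (auto simp: fan_identify_def)
  then show "p \<in> range fan_identify"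
    by (metis rangeI)
qed (auto simp: fan_identify_def)

lemma openin_sequential_fan:
  "openin sequential_fan U \<longleftrightarrow>
     U \<subseteq> range fan_identify \<and> (\<forall>m. open {e. fan_identify (m, e) \<in> U})"
  unfolding sequential_fan_def omega_plus_one_def openin_quotient_topology
  by (simp only: openin_sum_topology topspace_sum_topology o_def topspace_euclidean
      UNIV_Times_UNIV subset_UNIV ball_UNIV open_openin UNIV_I mem_Collect_eq simp_thms)

lemma topspace_sequential_fan: "topspace sequential_fan = range fan_identify"
proof (rule subset_antisym)
  show "topspace sequential_fan \<subseteq> range fan_identify"
    using openin_sequential_fan[of "topspace sequential_fan"] by simp
  show "range fan_identify \<subseteq> topspace sequential_fan"
    by (rule openin_subset) (simp add: openin_sequential_fan)
qed

lemma fan_identify_finite [simp]: "fan_identify (m, enat k) = (m, enat k)"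
  and fan_identify_infinity [simp]: "fan_identify (m, \<infinity>) = fan_apex"
  by (simp_all add: fan_identify_def)

lemma closedin_sequential_fan:
  "closedin sequential_fan D \<longleftrightarrow>
     D \<subseteq> range fan_identify \<and> (fan_apex \<notin> D \<longrightarrow> (\<forall>m. finite {k. (m, enat k) \<in> D}))"
proof -
  have "{e. fan_identify (m, e) \<in> range fan_identify - D} = {e. fan_identify (m, e) \<notin> D}" for m
    by auto
  then have "openin sequential_fan (range fan_identify - D) \<longleftrightarrow>
      (\<forall>m. fan_apex \<notin> D \<longrightarrow> finite {k. (m, enat k) \<in> D})"
    by (simp add: openin_sequential_fan open_enat_iff)
  then show ?thesis
    by (auto simp: closedin_def topspace_sequential_fan)
qed

lemma closedin_sequential_fan_finite:
  assumes "finite D" "\<forall>p\<in>D. snd p \<noteq> \<infinity>"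
  shows "closedin sequential_fan D"
proof -
  have "finite ((\<lambda>k. (m, enat k)) -` D)" for m
    using assms(1) by (rule finite_vimageI) (simp add: inj_def)
  with assms(2) show ?thesis
    by (auto simp: closedin_sequential_fan range_fan_identify vimage_def)
qed

lemma openin_sequential_fan_apex:
  assumes "openin sequential_fan U" "fan_apex \<in> U"
  shows "finite {k. (m, enat k) \<notin> U}"
  using assms by (simp add: openin_sequential_fan open_enat_iff)

definition fan_lsc_map :: "enat \<Rightarrow> (nat \<times> enat) set" where
  "fan_lsc_map y =
     (case y of
        enat n \<Rightarrow> (case prod_decode n of (a, b) \<Rightarrow> {(Suc a, enat b), (0, enat a)})
      | \<infinity> \<Rightarrow> {fan_apex})"

lemma fan_lsc_map_infinity [simp]: "fan_lsc_map \<infinity> = {fan_apex}"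
  and fan_lsc_map_prod_encode [simp]:
    "fan_lsc_map (enat (prod_encode (a, b))) = {(Suc a, enat b), (0, enat a)}"
  by (simp_all add: fan_lsc_map_def)

lemma enat_prod_encode_cases:
  obtains "y = \<infinity>" | a b where "y = enat (prod_encode (a, b))"
  by (metis enat.exhaust prod_decode_inverse surj_pair)

lemma fan_lsc_map_nonempty: "fan_lsc_map y \<noteq> {}"
  by (cases y rule: enat_prod_encode_cases) simp_all

lemma closedin_fan_lsc_map: "closedin sequential_fan (fan_lsc_map y)"
proof (cases y rule: enat_prod_encode_cases)
  case 1
  then show ?thesis
    by (simp add: closedin_sequential_fan range_fan_identify)
next
  case (2 a b)
  then show ?thesis
    by (simp add: closedin_sequential_fan_finite)
qed

lemma lsc_fan_lsc_map: "lsc_map omega_plus_one sequential_fan fan_lsc_map"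
  unfolding lsc_map_def
proof (intro allI impI)
  fix U
  assume U: "openin sequential_fan U"
  have "finite {n. fan_lsc_map (enat n) \<inter> U = {}}" if "fan_apex \<in> U"
  proof (rule finite_subset)
    show "{n. fan_lsc_map (enat n) \<inter> U = {}} \<subseteq>
        prod_encode ` (SIGMA a:{a. (0, enat a) \<notin> U}. {b. (Suc a, enat b) \<notin> U})"
    proof
      fix n
      assume "n \<in> {n. fan_lsc_map (enat n) \<inter> U = {}}"
      moreover obtain a b where "n = prod_encode (a, b)"
        by (metis prod_decode_inverse surj_pair)
      ultimately show "n \<in> prod_encode ` (SIGMA a:{a. (0, enat a) \<notin> U}. {b. (Suc a, enat b) \<notin> U})"
        by auto
    qed
    show "finite (prod_encode ` (SIGMA a:{a. (0, enat a) \<notin> U}. {b. (Suc a, enat b) \<notin> U}))"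
      using openin_sequential_fan_apex[OF U that] by blast
  qed
  then have "open {y. fan_lsc_map y \<inter> U \<noteq> {}}"
    by (simp add: open_enat_iff)
  then show "openin omega_plus_one {y \<in> topspace omega_plus_one. fan_lsc_map y \<inter> U \<noteq> {}}"
    by (simp add: omega_plus_one_def)
qed

lemma continuous_map_omega_plus_one_to_fan_avoids:
  assumes f: "continuous_map omega_plus_one sequential_fan f" "f \<infinity> = fan_apex"
    and D: "closedin sequential_fan D" "fan_apex \<notin> D"
  shows "finite {n. f (enat n) \<in> D}"
proof -
  have "openin sequential_fan (topspace sequential_fan - D)"
    using D(1) by (simp add: closedin_def)
  moreover have "f \<infinity> \<in> topspace sequential_fan - D"
    using f(2) D(2) by (simp add: topspace_sequential_fan range_fan_identify)
  ultimately have "finite {n. f (enat n) \<notin> topspace sequential_fan - D}"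
    by (rule continuous_map_omega_plus_one_cofinite[OF f(1)])
  then show ?thesis
    by (rule finite_subset[rotated]) blast
qed

lemma fan_lsc_map_no_continuous_selection:
  assumes f: "continuous_map omega_plus_one sequential_fan f"
    and sel: "\<And>y. f y \<in> fan_lsc_map y"
  shows False
proof -
  have apex: "f \<infinity> = fan_apex"
    using sel[of \<infinity>] by simp
  have infinite_row: "infinite (range (\<lambda>b. prod_encode (a, b)))" for a
    by (rule range_inj_infinite) (simp add: inj_def)
  have "\<exists>b. f (enat (prod_encode (a, b))) = (Suc a, enat b)" for a
  proof (rule ccontr)
    assume "\<nexists>b. f (enat (prod_encode (a, b))) = (Suc a, enat b)"
    then have "f (enat (prod_encode (a, b))) = (0, enat a)" for b
      using sel[of "enat (prod_encode (a, b))"] by auto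
    then have "range (\<lambda>b. prod_encode (a, b)) \<subseteq> {n. f (enat n) \<in> {(0, enat a)}}"
      by auto
    moreover have "finite {n. f (enat n) \<in> {(0, enat a)}}"
      by (rule continuous_map_omega_plus_one_to_fan_avoids[OF f apex])
        (simp_all add: closedin_sequential_fan_finite)
    ultimately show False
      using infinite_row finite_subset by blast
  qed
  then obtain b where b: "\<And>a. f (enat (prod_encode (a, b a))) = (Suc a, enat (b a))"
    by metis
  define D where "D = range (\<lambda>a. (Suc a, enat (b a)))"
  have "finite {k. (m, enat k) \<in> D}" for m
    by (rule finite_subset[of _ "{b (m - 1)}"]) (auto simp: D_def)
  moreover have "D \<subseteq> range fan_identify"
    by (auto simp: range_fan_identify D_def)
  ultimately have "closedin sequential_fan D"
    by (simp add: closedin_sequential_fan)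
  then have "finite {n. f (enat n) \<in> D}"
    by (rule continuous_map_omega_plus_one_to_fan_avoids[OF f apex]) (auto simp: D_def)
  moreover have "range (\<lambda>a. prod_encode (a, b a)) \<subseteq> {n. f (enat n) \<in> D}"
    using b by (auto simp: D_def)
  moreover have "infinite (range (\<lambda>a. prod_encode (a, b a)))"
    by (rule range_inj_infinite) (simp add: inj_def)
  ultimately show False
    using finite_subset by blast
qed

theorem mainTheorem17:
  shows "\<not> L_selective sequential_fan"
proof
  assume "L_selective sequential_fan"
  then obtain f where f: "continuous_map omega_plus_one sequential_fan f"
    and sel: "\<forall>y\<in>topspace omega_plus_one. f y \<in> fan_lsc_map y"
    unfolding L_selective_def selective_def
    using closedin_fan_lsc_map fan_lsc_map_nonempty lsc_fan_lsc_map by blast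
  show False
    by (rule fan_lsc_map_no_continuous_selection[OF f]) (use sel in simp)
qed

end
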